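(* Let $\alpha=(\alpha_k)_{k\in\mathbb{N}}\in\ell^2$ and let $I=[a,b]$ be an interval in $\mathbb{N}$ ($a\le b$). Then $$\tfrac12 J(I)\le K(I)=\tfrac{1}{\sqrt2}L(I)\le 2J(I).$$
   Context: $\mathbb{N}=\{0,1,2,\dots\}$; intervals are sets $[a,b]\cap\mathbb{N}$. Notation: $\|f\|_{2,I}=(\sum_{k\in I}|f(k)|^2)^{1/2}$, $\mu(I)=\sum_{k\in I}|\alpha_k|^2$, $S_f(k)=\sum_{j=0}^k f(j)$, and for $\mu(I)>0$, $(S_f)_I=\mu(I)^{-1}\sum_{k\in I}S_f(k)|\alpha_k|^2$. $L(I)$: with $l(I,f)=\sum_{k\in I}\sum_{n\in I\setminus\{k\}}|\alpha_k\alpha_n\sum_{j=\min(k,n)+1}^{\max(k,n)}f(j)|^2$, set $L(I)=(\sup_{\|f\|_{2,I}\le1}l(I,f)/\mu(I))^{1/2}$ (sup over $f\in\ell^2$ supported in $I$), and $L(I)=0$ if $\alpha$ vanishes on $I$. $K(I)=\sup_{\|f\|_{2,I}\le1}\big(\sum_{k\in I}|S_f(k)-(S_f)_I|^2|\alpha_k|^2\big)^{1/2}$ (sup over $f\in\ell^2$ supported in $I$; this is $0$ if $\alpha$ vanishes on $I$). $J(I)=\inf_{c\in I}\max(A_c,B_c)$ where $A_c=\sup_{a\le s\le c}(c-s)^{1/2}(\sum_{k=a}^s|\alpha_k|^2)^{1/2}$ and $B_c=\sup_{c\le s\le b}(s-c)^{1/2}(\sum_{k=s}^b|\alpha_k|^2)^{1/2}$.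 *)

theory Defs
  imports "HOL-Analysis.Analysis"
begin

definition l2norm_on :: "(nat \<Rightarrow> complex) \<Rightarrow> nat set \<Rightarrow> real" where
  "l2norm_on f I = sqrt (\<Sum>k\<in>I. (cmod (f k))\<^sup>2)"

definition mu :: "(nat \<Rightarrow> complex) \<Rightarrow> nat set \<Rightarrow> real" where
  "mu \<alpha> I = (\<Sum>k\<in>I. (cmod (\<alpha> k))\<^sup>2)"

definition Sf :: "(nat \<Rightarrow> complex) \<Rightarrow> nat \<Rightarrow> complex" where
  "Sf f k = (\<Sum>j=0..k. f j)"

definition Sf_avg :: "(nat \<Rightarrow> complex) \<Rightarrow> (nat \<Rightarrow> complex) \<Rightarrow> nat set \<Rightarrow> complex" where
  "Sf_avg \<alpha> f I = complex_of_real (inverse (mu \<alpha> I)) *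
      (\<Sum>k\<in>I. Sf f k * complex_of_real ((cmod (\<alpha> k))\<^sup>2))"

definition test_fns :: "nat set \<Rightarrow> (nat \<Rightarrow> complex) set" where
  "test_fns I = {f. (\<forall>k. k \<notin> I \<longrightarrow> f k = 0) \<and> l2norm_on f I \<le> 1}"

definition lfun :: "(nat \<Rightarrow> complex) \<Rightarrow> nat set \<Rightarrow> (nat \<Rightarrow> complex) \<Rightarrow> real" where
  "lfun \<alpha> I f = (\<Sum>k\<in>I. \<Sum>n\<in>I - {k}.
      (cmod (\<alpha> k * \<alpha> n * (\<Sum>j\<in>{min k n + 1..max k n}. f j)))\<^sup>2)"

definition Lc :: "(nat \<Rightarrow> complex) \<Rightarrow> nat set \<Rightarrow> real" where
  "Lc \<alpha> I = (if (\<forall>k\<in>I. \<alpha> k = 0) then 0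
     else sqrt (Sup ((\<lambda>f. lfun \<alpha> I f / mu \<alpha> I) ` test_fns I)))"

definition Kc :: "(nat \<Rightarrow> complex) \<Rightarrow> nat set \<Rightarrow> real" where
  "Kc \<alpha> I = Sup ((\<lambda>f. sqrt (\<Sum>k\<in>I. (cmod (Sf f k - Sf_avg \<alpha> f I))\<^sup>2 * (cmod (\<alpha> k))\<^sup>2))
                   ` test_fns I)"

definition Ac :: "(nat \<Rightarrow> complex) \<Rightarrow> nat \<Rightarrow> nat \<Rightarrow> real" where
  "Ac \<alpha> a c = Max ((\<lambda>s. sqrt (real (c - s)) * sqrt (\<Sum>k=a..s. (cmod (\<alpha> k))\<^sup>2)) ` {a..c})"

definition Bc :: "(nat \<Rightarrow> complex) \<Rightarrow> nat \<Rightarrow> nat \<Rightarrow> real" where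
  "Bc \<alpha> b c = Max ((\<lambda>s. sqrt (real (s - c)) * sqrt (\<Sum>k=s..b. (cmod (\<alpha> k))\<^sup>2)) ` {c..b})"

definition Jc :: "(nat \<Rightarrow> complex) \<Rightarrow> nat \<Rightarrow> nat \<Rightarrow> real" where
  "Jc \<alpha> a b = Min ((\<lambda>c. max (Ac \<alpha> a c) (Bc \<alpha> b c)) ` {a..b})"

end

theory Submission
  imports Defs
begin

text \<open>
  \<open>K(I)\<^sup>2\<close> is the least value over constants \<open>z\<close> of the weighted variance
  \<open>\<Sum>\<^sub>k |S\<^sub>f(k) - z|\<^sup>2 |\<alpha>\<^sub>k|\<^sup>2\<close>, attained at the weighted mean \<open>(S\<^sub>f)\<^sub>I\<close>, and the pair sum
  \<open>l(I,f)\<close> is \<open>2\<mu>(I)\<close> times that variance; hence \<open>K = L/\<surd>2\<close>.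
  For \<open>K \<le> 2J\<close> compare \<open>S\<^sub>f\<close> with \<open>S\<^sub>f(c)\<close> at a point \<open>c\<close> realising \<open>J(I)\<close>: on either side of \<open>c\<close>
  the deviation is a weighted Hardy sum, bounded by \<open>4A\<^sub>c\<^sup>2\<close> resp. \<open>4B\<^sub>c\<^sup>2\<close> times \<open>\<parallel>f\<parallel>\<^sup>2\<close>.
  For \<open>J \<le> \<surd>2 K\<close> test with \<open>f = (q - p)\<^sup>-\<^sup>1\<^sup>/\<^sup>2 1\<^bsub>(p,q]\<^esub>\<close>: \<open>S\<^sub>f\<close> jumps by \<open>\<surd>(q - p)\<close>, so
  \<open>(q - p) min(\<mu>[a,p], \<mu>[q,b]) \<le> 2K\<^sup>2\<close>; at a point \<open>c\<close> halving the \<open>\<mu>\<close>-mass of \<open>[a,b]\<close> this bounds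
  both \<open>A\<^sub>c\<close> and \<open>B\<^sub>c\<close>.
\<close>

section \<open>A weighted discrete Hardy inequality\<close>

lemma sum_inverse_sqrt_le: "(\<Sum>i=1..m. 1 / sqrt (real i)) \<le> 2 * sqrt (real m)"
proof (induction m)
  case 0
  then show ?case by simp
next
  case (Suc m)
  have "sqrt m * sqrt (m + 1) \<le> m + 1/2"
    by (rule power2_le_imp_le) (simp_all add: power2_eq_square algebra_simps)
  then have "(2 * sqrt m + 1 / sqrt (m + 1)) * sqrt (m + 1) \<le> 2 * sqrt (m + 1) * sqrt (m + 1)"
    by (simp add: distrib_right mult.assoc)
  then have "2 * sqrt m + 1 / sqrt (m + 1) \<le> 2 * sqrt (m + 1)"
    by (simp add: mult_le_cancel_right)
  then show ?case
    using Suc by (simp add: add.commute)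
qed

text \<open>Abel summation: \<open>\<surd>m\<close> is telescoped as \<open>\<surd>i + \<Sum>(\<surd>j - \<surd>(j-1))\<close>, and each increment
  satisfies \<open>(\<surd>j - \<surd>(j-1)) / j \<le> 1/\<surd>(j-1) - 1/\<surd>j\<close>.\<close>
lemma sum_weight_sqrt_tail_telescope:
  fixes w :: "nat \<Rightarrow> real"
  assumes w: "\<And>m. 0 \<le> w m"
    and tail: "\<And>s. 1 \<le> s \<Longrightarrow> s \<le> N \<Longrightarrow> real s * (\<Sum>m=s..N. w m) \<le> C"
    and "1 \<le> i" "i \<le> N"
  shows "(\<Sum>m=i..N. w m * sqrt m) \<le> sqrt i * (\<Sum>m=i..N. w m) + C * (1 / sqrt i - 1 / sqrt N)"
  using \<open>i \<le> N\<close> \<open>1 \<le> i\<close>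
proof (induction i rule: inc_induct)
  case base
  then show ?case by simp
next
  case (step n)
  define R where "R = (\<Sum>m=Suc n..N. w m)"
  define d where "d = sqrt (n + 1) - sqrt n"
  have R0: "0 \<le> R" and d0: "0 \<le> d"
    unfolding R_def d_def using w by (simp_all add: sum_nonneg)
  have tail_n: "(n + 1) * R \<le> C"
    using tail[of "Suc n"] step.hyps unfolding R_def by simp
  have "sqrt n * sqrt (n + 1) \<le> sqrt (n + 1) * sqrt (n + 1)"
    by (intro mult_right_mono) simp_all
  then have "d * R * (sqrt n * sqrt (n + 1)) \<le> d * R * (n + 1)"
    using d0 R0 by (intro mult_left_mono) simp_all
  also have "\<dots> = d * ((n + 1) * R)"
    by simp
  also have "\<dots> \<le> d * C"
    using tail_n d0 by (rule mult_left_mono)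
  finally have "d * R \<le> C * (1 / sqrt n - 1 / sqrt (n + 1))"
    using step.prems unfolding d_def by (simp add: field_simps)
  moreover have "(\<Sum>m=Suc n..N. w m * sqrt m) \<le> sqrt (n + 1) * R + C * (1 / sqrt (n + 1) - 1 / sqrt N)"
    using step.IH unfolding R_def by (simp add: add.commute)
  ultimately show ?case
    using step.hyps unfolding R_def d_def by (simp add: sum.atLeast_Suc_atMost algebra_simps)
qed

lemma sum_weight_sqrt_tail_le:
  fixes w :: "nat \<Rightarrow> real"
  assumes w: "\<And>m. 0 \<le> w m"
    and tail: "\<And>s. 1 \<le> s \<Longrightarrow> s \<le> N \<Longrightarrow> real s * (\<Sum>m=s..N. w m) \<le> C"
    and i: "1 \<le> i" "i \<le> N"
  shows "(\<Sum>m=i..N. w m * sqrt m) \<le> 2 * C / sqrt i"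
proof -
  have C: "0 \<le> C"
    using tail[OF i] w by (meson mult_nonneg_nonneg of_nat_0_le_iff order_trans sum_nonneg)
  have "sqrt i * (\<Sum>m=i..N. w m) = (real i * (\<Sum>m=i..N. w m)) / sqrt i"
    using i by (simp add: field_simps)
  also have "\<dots> \<le> C / sqrt i"
    using tail[OF i] by (simp add: divide_right_mono)
  finally have "sqrt i * (\<Sum>m=i..N. w m) \<le> C / sqrt i" .
  moreover have "0 \<le> C / sqrt N"
    using C by simp
  moreover have "(\<Sum>m=i..N. w m * sqrt m) \<le> sqrt i * (\<Sum>m=i..N. w m) + C / sqrt i - C / sqrt N"
    using sum_weight_sqrt_tail_telescope[OF w tail i] by (simp add: right_diff_distrib)
  ultimately show ?thesis
    by linarith
qed

text \<open>The hypothesis is Muckenhoupt's condition for the discrete Hardy operator with unit weight on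
  the inner sums; the constant \<open>4\<close> is the classical one.\<close>
lemma weighted_hardy_inequality:
  fixes w g :: "nat \<Rightarrow> real"
  assumes w: "\<And>m. 0 \<le> w m"
    and tail: "\<And>s. 1 \<le> s \<Longrightarrow> s \<le> N \<Longrightarrow> real s * (\<Sum>m=s..N. w m) \<le> C"
  shows "(\<Sum>m=1..N. w m * (\<Sum>i=1..m. g i)\<^sup>2) \<le> 4 * C * (\<Sum>i=1..N. (g i)\<^sup>2)"
proof -
  have cauchy_schwarz: "(\<Sum>i=1..m. g i)\<^sup>2 \<le> (\<Sum>i=1..m. (g i)\<^sup>2 * sqrt i) * (2 * sqrt m)" for m
  proof -
    have "(\<Sum>i=1..m. g i)\<^sup>2 = (\<Sum>i=1..m. (g i * sqrt (sqrt i)) * (1 / sqrt (sqrt i)))\<^sup>2"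
      by (rule arg_cong[where f="\<lambda>x. x\<^sup>2"], rule sum.cong) auto
    also have "\<dots> \<le> (\<Sum>i=1..m. (g i * sqrt (sqrt i))\<^sup>2) * (\<Sum>i=1..m. (1 / sqrt (sqrt i))\<^sup>2)"
      by (rule Cauchy_Schwarz_ineq_sum)
    also have "\<dots> = (\<Sum>i=1..m. (g i)\<^sup>2 * sqrt i) * (\<Sum>i=1..m. 1 / sqrt i)"
      by (simp add: power_mult_distrib power_divide)
    also have "\<dots> \<le> (\<Sum>i=1..m. (g i)\<^sup>2 * sqrt i) * (2 * sqrt m)"
      by (intro mult_left_mono sum_inverse_sqrt_le sum_nonneg) simp
    finally show ?thesis .
  qed
  have swap: "(\<Sum>m=1..N. \<Sum>i=1..m. F i m) = (\<Sum>i=1..N. \<Sum>m=i..N. F i m)" for F :: "nat \<Rightarrow> nat \<Rightarrow> real"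
  proof -
    have "(\<Sum>m=1..N. \<Sum>i=1..m. F i m) = (\<Sum>m=1..N. \<Sum>i\<in>{i. i \<in> {1..N} \<and> i \<le> m}. F i m)"
      by (intro sum.cong) auto
    also have "\<dots> = (\<Sum>i=1..N. \<Sum>m\<in>{m. m \<in> {1..N} \<and> i \<le> m}. F i m)"
      by (rule sum.swap_restrict) simp_all
    also have "\<dots> = (\<Sum>i=1..N. \<Sum>m=i..N. F i m)"
      by (intro sum.cong) auto
    finally show ?thesis .
  qed
  have "(\<Sum>m=1..N. w m * (\<Sum>i=1..m. g i)\<^sup>2) \<le> (\<Sum>m=1..N. w m * ((\<Sum>i=1..m. (g i)\<^sup>2 * sqrt i) * (2 * sqrt m)))"
    by (intro sum_mono mult_left_mono cauchy_schwarz w)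
  also have "\<dots> = (\<Sum>m=1..N. \<Sum>i=1..m. (g i)\<^sup>2 * sqrt i * 2 * (w m * sqrt m))"
    by (simp add: sum_distrib_left sum_distrib_right algebra_simps)
  also have "\<dots> = (\<Sum>i=1..N. (g i)\<^sup>2 * sqrt i * 2 * (\<Sum>m=i..N. w m * sqrt m))"
    unfolding swap by (simp add: sum_distrib_left)
  also have "\<dots> \<le> (\<Sum>i=1..N. (g i)\<^sup>2 * sqrt i * 2 * (2 * C / sqrt i))"
    by (intro sum_mono mult_left_mono sum_weight_sqrt_tail_le[OF w tail]) auto
  also have "\<dots> = 4 * C * (\<Sum>i=1..N. (g i)\<^sup>2)"
    by (simp add: sum_distrib_left mult_ac)
  finally show ?thesis .
qed

lemma weighted_hardy_inequality_right:
  fixes w g :: "nat \<Rightarrow> real"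
  assumes w: "\<And>m. 0 \<le> w m" and "c \<le> b"
    and tail: "\<And>s. c < s \<Longrightarrow> s \<le> b \<Longrightarrow> real (s - c) * (\<Sum>k=s..b. w k) \<le> C"
  shows "(\<Sum>k=Suc c..b. w k * (\<Sum>j=Suc c..k. g j)\<^sup>2) \<le> 4 * C * (\<Sum>j=Suc c..b. (g j)\<^sup>2)"
proof -
  define N where "N = b - c"
  have b: "b = N + c"
    using \<open>c \<le> b\<close> N_def by simp
  have shift: "(\<Sum>k=Suc c..b. F k) = (\<Sum>m=1..N. F (m + c))" for F :: "nat \<Rightarrow> real"
    unfolding b using sum.shift_bounds_cl_nat_ivl[of F 1 c N] by simp
  have "(\<Sum>m=1..N. w (m + c) * (\<Sum>i=1..m. g (i + c))\<^sup>2) \<le> 4 * C * (\<Sum>i=1..N. (g (i + c))\<^sup>2)"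
  proof (rule weighted_hardy_inequality)
    fix s
    assume "1 \<le> s" "s \<le> N"
    then show "real s * (\<Sum>m=s..N. w (m + c)) \<le> C"
      using tail[of "s + c"] b sum.shift_bounds_cl_nat_ivl[of w s c N] by simp
  qed (rule w)
  moreover have "(\<Sum>j=Suc c..m + c. g j) = (\<Sum>i=1..m. g (i + c))" for m
    using sum.shift_bounds_cl_nat_ivl[of g 1 c m] by simp
  ultimately show ?thesis
    by (simp add: shift)
qed

lemma weighted_hardy_inequality_left:
  fixes w g :: "nat \<Rightarrow> real"
  assumes w: "\<And>m. 0 \<le> w m" and "a \<le> c"
    and tail: "\<And>s. a \<le> s \<Longrightarrow> s < c \<Longrightarrow> real (c - s) * (\<Sum>k=a..s. w k) \<le> C"
  shows "(\<Sum>k\<in>{a..<c}. w k * (\<Sum>j=Suc k..c. g j)\<^sup>2) \<le> 4 * C * (\<Sum>j=Suc a..c. (g j)\<^sup>2)"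
proof -
  define N where "N = c - a"
  have reflect: "(\<Sum>j=Suc (c - m)..c. F j) = (\<Sum>i=1..m. F (Suc c - i))"
    if "m \<le> c" for m and F :: "nat \<Rightarrow> real"
    by (rule sum.reindex_bij_witness[where i="\<lambda>i. Suc c - i" and j="\<lambda>j. Suc c - j"]) (use that in auto)
  have "(\<Sum>k\<in>{a..<c}. w k * (\<Sum>j=Suc k..c. g j)\<^sup>2)
      = (\<Sum>m=1..N. w (c - m) * (\<Sum>j=Suc (c - m)..c. g j)\<^sup>2)"
    by (rule sum.reindex_bij_witness[where i="\<lambda>k. c - k" and j="\<lambda>m. c - m"]) (use N_def \<open>a \<le> c\<close> in auto)
  also have "\<dots> = (\<Sum>m=1..N. w (c - m) * (\<Sum>i=1..m. g (Suc c - i))\<^sup>2)"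
    by (rule sum.cong[OF refl]) (use reflect[where F=g] N_def in auto)
  also have "\<dots> \<le> 4 * C * (\<Sum>i=1..N. (g (Suc c - i))\<^sup>2)"
  proof (rule weighted_hardy_inequality)
    fix s
    assume s: "1 \<le> s" "s \<le> N"
    have "(\<Sum>m=s..N. w (c - m)) = (\<Sum>k=a..c - s. w k)"
      by (rule sum.reindex_bij_witness[where i="\<lambda>k. c - k" and j="\<lambda>m. c - m"]) (use s N_def in auto)
    then show "real s * (\<Sum>m=s..N. w (c - m)) \<le> C"
      using tail[of "c - s"] s N_def by simp
  qed (rule w)
  also have "(\<Sum>i=1..N. (g (Suc c - i))\<^sup>2) = (\<Sum>j=Suc a..c. (g j)\<^sup>2)"
    using reflect[of N "\<lambda>j. (g j)\<^sup>2"] N_def \<open>a \<le> c\<close> by simp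
  finally show ?thesis .
qed

section \<open>Weighted variance\<close>

lemma sum_sq_dist_weighted_shift:
  fixes x :: "'i \<Rightarrow> 'a::real_inner" and w :: "'i \<Rightarrow> real"
  assumes mean: "(\<Sum>k\<in>I. w k *\<^sub>R x k) = (\<Sum>k\<in>I. w k) *\<^sub>R m"
  shows "(\<Sum>k\<in>I. (norm (x k - z))\<^sup>2 * w k)
       = (\<Sum>k\<in>I. (norm (x k - m))\<^sup>2 * w k) + (\<Sum>k\<in>I. w k) * (norm (m - z))\<^sup>2"
proof -
  have expand: "(norm (x k - z))\<^sup>2 * w k
      = (norm (x k - m))\<^sup>2 * w k + 2 * (w k * inner (x k - m) (m - z)) + w k * (norm (m - z))\<^sup>2" for k
    by (simp add: power2_norm_eq_inner inner_commute algebra_simps)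
  have "(\<Sum>k\<in>I. w k * inner (x k - m) (m - z)) = inner (\<Sum>k\<in>I. w k *\<^sub>R x k - w k *\<^sub>R m) (m - z)"
    by (simp add: inner_sum_left inner_diff_left flip: scaleR_diff_right)
  also have "\<dots> = 0"
    by (simp add: sum_subtractf mean scaleR_sum_left)
  finally have cross: "(\<Sum>k\<in>I. w k * inner (x k - m) (m - z)) = 0" .
  show ?thesis
    unfolding expand sum.distrib using cross by (simp flip: sum_distrib_left sum_distrib_right)
qed

lemma sum_sq_dist_weighted_pairs:
  fixes x :: "'i \<Rightarrow> 'a::real_inner" and w :: "'i \<Rightarrow> real"
  assumes mean: "(\<Sum>k\<in>I. w k *\<^sub>R x k) = (\<Sum>k\<in>I. w k) *\<^sub>R m"
  shows "(\<Sum>k\<in>I. \<Sum>n\<in>I. w k * w n * (norm (x k - x n))\<^sup>2)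
       = 2 * (\<Sum>k\<in>I. w k) * (\<Sum>k\<in>I. (norm (x k - m))\<^sup>2 * w k)"
proof -
  let ?W = "\<Sum>k\<in>I. w k" and ?V = "\<Sum>k\<in>I. (norm (x k - m))\<^sup>2 * w k"
  have "(\<Sum>k\<in>I. \<Sum>n\<in>I. w k * w n * (norm (x k - x n))\<^sup>2)
      = (\<Sum>n\<in>I. w n * (\<Sum>k\<in>I. (norm (x k - x n))\<^sup>2 * w k))"
    by (subst sum.swap) (simp add: sum_distrib_left algebra_simps)
  also have "\<dots> = (\<Sum>n\<in>I. w n * ?V + ?W * ((norm (x n - m))\<^sup>2 * w n))"
    using sum_sq_dist_weighted_shift[OF mean, of "x n" for n]
    by (simp add: norm_minus_commute algebra_simps)
  also have "\<dots> = 2 * ?W * ?V"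
    by (simp add: sum.distrib flip: sum_distrib_left sum_distrib_right)
  finally show ?thesis .
qed

lemma Sf_diff: "k \<le> n \<Longrightarrow> Sf f n - Sf f k = (\<Sum>j=Suc k..n. f j)"
  by (induction n rule: dec_induct) (simp_all add: Sf_def)

lemma Sf_avg_weighted_mean:
  assumes "finite I"
  shows "(\<Sum>k\<in>I. (cmod (\<alpha> k))\<^sup>2 *\<^sub>R Sf f k) = (\<Sum>k\<in>I. (cmod (\<alpha> k))\<^sup>2) *\<^sub>R Sf_avg \<alpha> f I"
proof (cases "mu \<alpha> I = 0")
  case True
  then have "\<forall>k\<in>I. (cmod (\<alpha> k))\<^sup>2 = 0"
    using assms unfolding mu_def by (subst sum_nonneg_eq_0_iff[symmetric]) auto
  then show ?thesis
    by simp
next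
  case False
  have "(\<Sum>k\<in>I. (cmod (\<alpha> k))\<^sup>2 *\<^sub>R Sf f k) = (\<Sum>k\<in>I. Sf f k * complex_of_real ((cmod (\<alpha> k))\<^sup>2))"
    by (simp add: scaleR_conv_of_real mult.commute)
  also have "\<dots> = mu \<alpha> I *\<^sub>R Sf_avg \<alpha> f I"
    using False by (simp add: Sf_avg_def scaleR_conv_of_real flip: of_real_mult)
  finally show ?thesis
    unfolding mu_def .
qed

definition Sf_dev :: "(nat \<Rightarrow> complex) \<Rightarrow> nat set \<Rightarrow> (nat \<Rightarrow> complex) \<Rightarrow> real" where
  "Sf_dev \<alpha> I f = sqrt (\<Sum>k\<in>I. (cmod (Sf f k - Sf_avg \<alpha> f I))\<^sup>2 * (cmod (\<alpha> k))\<^sup>2)"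

lemma Kc_eq_Sup_Sf_dev: "Kc \<alpha> I = Sup (Sf_dev \<alpha> I ` test_fns I)"
  unfolding Kc_def Sf_dev_def ..

lemma Sf_dev_nonneg: "0 \<le> Sf_dev \<alpha> I f"
  unfolding Sf_dev_def by (simp add: sum_nonneg)

lemma Sf_dev_sq: "(Sf_dev \<alpha> I f)\<^sup>2 = (\<Sum>k\<in>I. (cmod (Sf f k - Sf_avg \<alpha> f I))\<^sup>2 * (cmod (\<alpha> k))\<^sup>2)"
  unfolding Sf_dev_def by (simp add: sum_nonneg)

lemma Sf_dev_sq_le:
  assumes "finite I"
  shows "(Sf_dev \<alpha> I f)\<^sup>2 \<le> (\<Sum>k\<in>I. (cmod (Sf f k - z))\<^sup>2 * (cmod (\<alpha> k))\<^sup>2)"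
proof -
  have "0 \<le> (\<Sum>k\<in>I. (cmod (\<alpha> k))\<^sup>2) * (cmod (Sf_avg \<alpha> f I - z))\<^sup>2"
    by (simp add: sum_nonneg)
  then show ?thesis
    using sum_sq_dist_weighted_shift[OF Sf_avg_weighted_mean[OF assms, where \<alpha>=\<alpha> and f=f], where z=z]
    unfolding Sf_dev_sq by linarith
qed

lemma lfun_eq_Sf_dev:
  assumes "finite I"
  shows "lfun \<alpha> I f = 2 * mu \<alpha> I * (Sf_dev \<alpha> I f)\<^sup>2"
proof -
  have "cmod (\<Sum>j\<in>{min k n + 1..max k n}. f j) = cmod (Sf f k - Sf f n)" for k n
    using Sf_diff[of k n f] Sf_diff[of n k f] norm_minus_commute[of "Sf f k" "Sf f n"]
    by (cases "k \<le> n") simp_all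
  then have "lfun \<alpha> I f
      = (\<Sum>k\<in>I. \<Sum>n\<in>I - {k}. (cmod (\<alpha> k))\<^sup>2 * (cmod (\<alpha> n))\<^sup>2 * (cmod (Sf f k - Sf f n))\<^sup>2)"
    unfolding lfun_def by (simp add: norm_mult power_mult_distrib)
  also have "\<dots> = (\<Sum>k\<in>I. \<Sum>n\<in>I. (cmod (\<alpha> k))\<^sup>2 * (cmod (\<alpha> n))\<^sup>2 * (cmod (Sf f k - Sf f n))\<^sup>2)"
    by (rule sum.cong[OF refl]) (simp add: sum_diff1 assms)
  also have "\<dots> = 2 * mu \<alpha> I * (Sf_dev \<alpha> I f)\<^sup>2"
    unfolding sum_sq_dist_weighted_pairs[OF Sf_avg_weighted_mean[OF assms]] Sf_dev_sq mu_def ..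
  finally show ?thesis .
qed

lemma test_fns_sum_sq_le_1: "f \<in> test_fns I \<Longrightarrow> (\<Sum>k\<in>I. (cmod (f k))\<^sup>2) \<le> 1"
  unfolding test_fns_def l2norm_on_def by simp

lemma zero_in_test_fns: "(\<lambda>_. 0) \<in> test_fns I"
  unfolding test_fns_def l2norm_on_def by simp

lemma Sf_dev_le_Kc:
  assumes "bdd_above (Sf_dev \<alpha> I ` test_fns I)" "f \<in> test_fns I"
  shows "Sf_dev \<alpha> I f \<le> Kc \<alpha> I"
  unfolding Kc_eq_Sup_Sf_dev using assms by (intro cSup_upper) auto

lemma Kc_nonneg: "bdd_above (Sf_dev \<alpha> I ` test_fns I) \<Longrightarrow> 0 \<le> Kc \<alpha> I"
  using Sf_dev_le_Kc[OF _ zero_in_test_fns] Sf_dev_nonneg order_trans by blast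

lemma sqrt_cSup:
  fixes S :: "real set"
  assumes "S \<noteq> {}" "bdd_above S"
  shows "sqrt (Sup S) = Sup (sqrt ` S)"
  by (rule continuous_at_Sup_mono)
    (simp_all add: assms monoI continuous_at_imp_continuous_at_within isCont_real_sqrt)

lemma mult_cSup:
  fixes S :: "real set"
  assumes "0 \<le> c" "S \<noteq> {}" "bdd_above S"
  shows "c * Sup S = Sup ((\<lambda>x. c * x) ` S)"
  by (rule continuous_at_Sup_mono)
    (simp_all add: assms monoI mult_left_mono continuous_at_imp_continuous_at_within)

lemma Lc_eq_sqrt2_Kc:
  assumes "finite I" and bdd: "bdd_above (Sf_dev \<alpha> I ` test_fns I)"
  shows "Lc \<alpha> I = sqrt 2 * Kc \<alpha> I"
proof (cases "\<forall>k\<in>I. \<alpha> k = 0")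
  case True
  then have "Sf_dev \<alpha> I ` test_fns I = {0}"
    using zero_in_test_fns by (auto simp: Sf_dev_def)
  then show ?thesis
    using True by (simp add: Lc_def Kc_eq_Sup_Sf_dev)
next
  case False
  let ?T = "test_fns I" and ?S = "(\<lambda>f. 2 * (Sf_dev \<alpha> I f)\<^sup>2) ` test_fns I"
  have "mu \<alpha> I \<noteq> 0"
    using False \<open>finite I\<close> unfolding mu_def by (subst sum_nonneg_eq_0_iff) auto
  then have "(\<lambda>f. lfun \<alpha> I f / mu \<alpha> I) = (\<lambda>f. 2 * (Sf_dev \<alpha> I f)\<^sup>2)"
    by (simp add: lfun_eq_Sf_dev[OF \<open>finite I\<close>])
  then have "Lc \<alpha> I = sqrt (Sup ?S)"
    unfolding Lc_def using False by (simp only: if_False)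
  also have "\<dots> = Sup (sqrt ` ?S)"
  proof (rule sqrt_cSup)
    obtain B where "\<And>f. f \<in> ?T \<Longrightarrow> Sf_dev \<alpha> I f \<le> B"
      using bdd by (auto simp: bdd_above_def)
    then show "bdd_above ?S"
      using Sf_dev_nonneg by (intro bdd_aboveI2[where M="2 * B\<^sup>2"]) (simp add: power_mono)
  qed (use zero_in_test_fns in blast)
  also have "sqrt ` ?S = (\<lambda>x. sqrt 2 * x) ` Sf_dev \<alpha> I ` ?T"
    by (auto simp: image_image real_sqrt_mult Sf_dev_nonneg)
  also have "Sup \<dots> = sqrt 2 * Kc \<alpha> I"
    unfolding Kc_eq_Sup_Sf_dev using bdd zero_in_test_fns by (intro mult_cSup[symmetric]) auto
  finally show ?thesis .
qed

lemma sqrt_mult_sqrt_le_iff: "0 \<le> M \<Longrightarrow> sqrt x * sqrt y \<le> M \<longleftrightarrow> x * y \<le> M\<^sup>2"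
  by (metis real_sqrt_mult real_le_lsqrt sqrt_le_D)

lemma Ac_ge:
  assumes "a \<le> s" "s \<le> c"
  shows "sqrt (c - s) * sqrt (\<Sum>k=a..s. (cmod (\<alpha> k))\<^sup>2) \<le> Ac \<alpha> a c"
  unfolding Ac_def by (rule Max_ge) (use assms in auto)

lemma Bc_ge:
  assumes "c \<le> s" "s \<le> b"
  shows "sqrt (s - c) * sqrt (\<Sum>k=s..b. (cmod (\<alpha> k))\<^sup>2) \<le> Bc \<alpha> b c"
  unfolding Bc_def by (rule Max_ge) (use assms in auto)

lemma Ac_nonneg: "a \<le> c \<Longrightarrow> 0 \<le> Ac \<alpha> a c"
  using Ac_ge[of a c c \<alpha>] by simp

lemma Bc_nonneg: "c \<le> b \<Longrightarrow> 0 \<le> Bc \<alpha> b c"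
  using Bc_ge[of c c b \<alpha>] by simp

lemma mass_mult_le_Ac_sq:
  assumes "a \<le> s" "s \<le> c"
  shows "real (c - s) * (\<Sum>k=a..s. (cmod (\<alpha> k))\<^sup>2) \<le> (Ac \<alpha> a c)\<^sup>2"
  using Ac_ge[OF assms] sqrt_mult_sqrt_le_iff[OF Ac_nonneg] assms by simp

lemma mass_mult_le_Bc_sq:
  assumes "c \<le> s" "s \<le> b"
  shows "real (s - c) * (\<Sum>k=s..b. (cmod (\<alpha> k))\<^sup>2) \<le> (Bc \<alpha> b c)\<^sup>2"
  using Bc_ge[OF assms] sqrt_mult_sqrt_le_iff[OF Bc_nonneg] assms by simp

lemma Ac_le:
  assumes "a \<le> c" "0 \<le> M"
    and mass: "\<And>s. a \<le> s \<Longrightarrow> s < c \<Longrightarrow> real (c - s) * (\<Sum>k=a..s. (cmod (\<alpha> k))\<^sup>2) \<le> M\<^sup>2"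
  shows "Ac \<alpha> a c \<le> M"
proof -
  have "sqrt (c - s) * sqrt (\<Sum>k=a..s. (cmod (\<alpha> k))\<^sup>2) \<le> M" if "a \<le> s" "s \<le> c" for s
    using that mass[of s] \<open>0 \<le> M\<close> by (cases "s = c") (simp_all add: sqrt_mult_sqrt_le_iff)
  then show ?thesis
    unfolding Ac_def using \<open>a \<le> c\<close> by (subst Max_le_iff) auto
qed

lemma Bc_le:
  assumes "c \<le> b" "0 \<le> M"
    and mass: "\<And>s. c < s \<Longrightarrow> s \<le> b \<Longrightarrow> real (s - c) * (\<Sum>k=s..b. (cmod (\<alpha> k))\<^sup>2) \<le> M\<^sup>2"
  shows "Bc \<alpha> b c \<le> M"
proof -
  have "sqrt (s - c) * sqrt (\<Sum>k=s..b. (cmod (\<alpha> k))\<^sup>2) \<le> M" if "c \<le> s" "s \<le> b" for s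
    using that mass[of s] \<open>0 \<le> M\<close> by (cases "s = c") (simp_all add: sqrt_mult_sqrt_le_iff)
  then show ?thesis
    unfolding Bc_def using \<open>c \<le> b\<close> by (subst Max_le_iff) auto
qed

lemma Jc_attained:
  assumes "a \<le> b"
  obtains c where "a \<le> c" "c \<le> b" "Jc \<alpha> a b = max (Ac \<alpha> a c) (Bc \<alpha> b c)"
proof -
  have "Jc \<alpha> a b \<in> (\<lambda>c. max (Ac \<alpha> a c) (Bc \<alpha> b c)) ` {a..b}"
    unfolding Jc_def by (rule Min_in) (use assms in auto)
  then show ?thesis
    using that by auto
qed

lemma Jc_le: "a \<le> c \<Longrightarrow> c \<le> b \<Longrightarrow> Jc \<alpha> a b \<le> max (Ac \<alpha> a c) (Bc \<alpha> b c)"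
  unfolding Jc_def by (rule Min_le) auto

section \<open>The upper bound \<open>K \<le> 2J\<close>\<close>

lemma left_sum_sq_Sf_diff_le:
  assumes "a \<le> c"
  shows "(\<Sum>k\<in>{a..<c}. (cmod (Sf f k - Sf f c))\<^sup>2 * (cmod (\<alpha> k))\<^sup>2)
      \<le> 4 * (Ac \<alpha> a c)\<^sup>2 * (\<Sum>j=Suc a..c. (cmod (f j))\<^sup>2)"
proof -
  have "(\<Sum>k\<in>{a..<c}. (cmod (Sf f k - Sf f c))\<^sup>2 * (cmod (\<alpha> k))\<^sup>2)
      \<le> (\<Sum>k\<in>{a..<c}. (cmod (\<alpha> k))\<^sup>2 * (\<Sum>j=Suc k..c. cmod (f j))\<^sup>2)"
  proof (rule sum_mono)
    fix k
    assume "k \<in> {a..<c}"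
    then have "cmod (Sf f k - Sf f c) \<le> (\<Sum>j=Suc k..c. cmod (f j))"
      using Sf_diff[of k c f] norm_sum[of f "{Suc k..c}"] by (simp add: norm_minus_commute)
    then show "(cmod (Sf f k - Sf f c))\<^sup>2 * (cmod (\<alpha> k))\<^sup>2 \<le> (cmod (\<alpha> k))\<^sup>2 * (\<Sum>j=Suc k..c. cmod (f j))\<^sup>2"
      by (simp add: power_mono mult.commute mult_left_mono)
  qed
  also have "\<dots> \<le> 4 * (Ac \<alpha> a c)\<^sup>2 * (\<Sum>j=Suc a..c. (cmod (f j))\<^sup>2)"
    by (rule weighted_hardy_inequality_left) (use assms mass_mult_le_Ac_sq in auto)
  finally show ?thesis .
qed

lemma right_sum_sq_Sf_diff_le:
  assumes "c \<le> b"
  shows "(\<Sum>k=Suc c..b. (cmod (Sf f k - Sf f c))\<^sup>2 * (cmod (\<alpha> k))\<^sup>2)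
      \<le> 4 * (Bc \<alpha> b c)\<^sup>2 * (\<Sum>j=Suc c..b. (cmod (f j))\<^sup>2)"
proof -
  have "(\<Sum>k=Suc c..b. (cmod (Sf f k - Sf f c))\<^sup>2 * (cmod (\<alpha> k))\<^sup>2)
      \<le> (\<Sum>k=Suc c..b. (cmod (\<alpha> k))\<^sup>2 * (\<Sum>j=Suc c..k. cmod (f j))\<^sup>2)"
  proof (rule sum_mono)
    fix k
    assume "k \<in> {Suc c..b}"
    then have "cmod (Sf f k - Sf f c) \<le> (\<Sum>j=Suc c..k. cmod (f j))"
      using Sf_diff[of c k f] norm_sum[of f "{Suc c..k}"] by simp
    then show "(cmod (Sf f k - Sf f c))\<^sup>2 * (cmod (\<alpha> k))\<^sup>2 \<le> (cmod (\<alpha> k))\<^sup>2 * (\<Sum>j=Suc c..k. cmod (f j))\<^sup>2"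
      by (simp add: power_mono mult.commute mult_left_mono)
  qed
  also have "\<dots> \<le> 4 * (Bc \<alpha> b c)\<^sup>2 * (\<Sum>j=Suc c..b. (cmod (f j))\<^sup>2)"
    by (rule weighted_hardy_inequality_right) (use assms mass_mult_le_Bc_sq in auto)
  finally show ?thesis .
qed

lemma Sf_dev_le_Jc:
  assumes "a \<le> b" "f \<in> test_fns {a..b}"
  shows "Sf_dev \<alpha> {a..b} f \<le> 2 * Jc \<alpha> a b"
proof -
  obtain c where c: "a \<le> c" "c \<le> b" and J: "Jc \<alpha> a b = max (Ac \<alpha> a c) (Bc \<alpha> b c)"
    using Jc_attained[OF assms(1)] .
  let ?J = "Jc \<alpha> a b" and ?D = "\<lambda>k. (cmod (Sf f k - Sf f c))\<^sup>2 * (cmod (\<alpha> k))\<^sup>2"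
    and ?F = "\<lambda>j. (cmod (f j))\<^sup>2"
  have AJ: "(Ac \<alpha> a c)\<^sup>2 \<le> ?J\<^sup>2" and BJ: "(Bc \<alpha> b c)\<^sup>2 \<le> ?J\<^sup>2"
    unfolding J using Ac_nonneg[OF c(1), of \<alpha>] Bc_nonneg[OF c(2), of \<alpha>] by (simp_all add: power_mono)
  have J0: "0 \<le> ?J"
    using J Ac_nonneg[OF c(1), of \<alpha>] by linarith
  have "(Sf_dev \<alpha> {a..b} f)\<^sup>2 \<le> (\<Sum>k\<in>{a..b}. ?D k)"
    by (rule Sf_dev_sq_le) simp
  also have "\<dots> = (\<Sum>k\<in>{a..<c}. ?D k) + (\<Sum>k=Suc c..b. ?D k)"
  proof -
    have "{a..b} = {a..<c} \<union> {c..b}"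
      using c by auto
    then have "(\<Sum>k\<in>{a..b}. ?D k) = (\<Sum>k\<in>{a..<c}. ?D k) + (\<Sum>k\<in>{c..b}. ?D k)"
      by (simp add: sum.union_disjoint ivl_disj_int)
    then show ?thesis
      using c by (simp add: sum.atLeast_Suc_atMost)
  qed
  also have "\<dots> \<le> 4 * (Ac \<alpha> a c)\<^sup>2 * (\<Sum>j=Suc a..c. ?F j) + 4 * (Bc \<alpha> b c)\<^sup>2 * (\<Sum>j=Suc c..b. ?F j)"
    by (intro add_mono left_sum_sq_Sf_diff_le right_sum_sq_Sf_diff_le c)
  also have "\<dots> \<le> 4 * ?J\<^sup>2 * ((\<Sum>j=Suc a..c. ?F j) + (\<Sum>j=Suc c..b. ?F j))"
    unfolding distrib_left using AJ BJ by (intro add_mono mult_right_mono) (simp_all add: sum_nonneg)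
  also have "\<dots> \<le> 4 * ?J\<^sup>2"
  proof -
    have "(\<Sum>j=Suc a..c. ?F j) + (\<Sum>j=Suc c..b. ?F j) = (\<Sum>j\<in>{Suc a..c} \<union> {Suc c..b}. ?F j)"
      by (rule sum.union_disjoint[symmetric]) auto
    also have "\<dots> \<le> (\<Sum>j\<in>{a..b}. ?F j)"
      by (rule sum_mono2) (use c in auto)
    also have "\<dots> \<le> 1"
      using assms(2) by (rule test_fns_sum_sq_le_1)
    finally show ?thesis
      by (simp add: mult_left_le)
  qed
  finally have "(Sf_dev \<alpha> {a..b} f)\<^sup>2 \<le> (2 * ?J)\<^sup>2"
    by (simp add: power_mult_distrib)
  then show ?thesis
    by (rule power2_le_imp_le) (use J0 in simp)
qed

lemma bdd_above_Sf_dev: "a \<le> b \<Longrightarrow> bdd_above (Sf_dev \<alpha> {a..b} ` test_fns {a..b})"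
  by (rule bdd_aboveI2) (rule Sf_dev_le_Jc)

lemma Kc_le_Jc:
  assumes "a \<le> b"
  shows "Kc \<alpha> {a..b} \<le> 2 * Jc \<alpha> a b"
  unfolding Kc_eq_Sup_Sf_dev using Sf_dev_le_Jc[OF assms] zero_in_test_fns by (intro cSup_least) auto

section \<open>The lower bound \<open>J \<le> \<surd>2 K\<close>\<close>

lemma norm_sq_mult_min_le:
  fixes h m :: "'a::real_normed_vector"
  assumes "0 \<le> W1" "0 \<le> W2"
  shows "(norm h)\<^sup>2 * min W1 W2 \<le> 2 * ((norm m)\<^sup>2 * W1 + (norm (h - m))\<^sup>2 * W2)"
proof -
  have "norm h \<le> norm m + norm (h - m)"
    using norm_triangle_ineq[of m "h - m"] by simp
  then have "(norm h)\<^sup>2 \<le> (norm m + norm (h - m))\<^sup>2"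
    by (rule power_mono) simp
  also have "\<dots> \<le> 2 * ((norm m)\<^sup>2 + (norm (h - m))\<^sup>2)"
    using zero_le_power2[of "norm m - norm (h - m)"] by (simp add: power2_eq_square algebra_simps)
  finally have "(norm h)\<^sup>2 * min W1 W2 \<le> 2 * ((norm m)\<^sup>2 + (norm (h - m))\<^sup>2) * min W1 W2"
    using assms by (intro mult_right_mono) simp_all
  also have "\<dots> \<le> 2 * ((norm m)\<^sup>2 * W1 + (norm (h - m))\<^sup>2 * W2)"
    by (simp add: distrib_left distrib_right add_mono mult_left_mono)
  finally show ?thesis .
qed

definition step_fn :: "nat \<Rightarrow> nat \<Rightarrow> nat \<Rightarrow> complex" where
  "step_fn p q j = (if j \<in> {Suc p..q} then complex_of_real (1 / sqrt (q - p)) else 0)"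

lemma Sf_step_fn_below: "k \<le> p \<Longrightarrow> Sf (step_fn p q) k = 0"
  unfolding Sf_def step_fn_def by (rule sum.neutral) auto

lemma Sf_step_fn_above:
  assumes "p < q" "q \<le> k"
  shows "Sf (step_fn p q) k = complex_of_real (sqrt (q - p))"
proof -
  have "Sf (step_fn p q) k = (\<Sum>j\<in>{0..k} \<inter> {Suc p..q}. complex_of_real (1 / sqrt (q - p)))"
    unfolding Sf_def step_fn_def by (rule sum.inter_restrict[symmetric]) simp
  also have "{0..k} \<inter> {Suc p..q} = {Suc p..q}"
    using assms by auto
  also have "(\<Sum>j\<in>{Suc p..q}. complex_of_real (1 / sqrt (q - p))) = complex_of_real ((q - p) / sqrt (q - p))"
    using assms by simp
  finally show ?thesis
    by (simp add: real_div_sqrt)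
qed

lemma step_fn_in_test_fns:
  assumes "a \<le> p" "p < q" "q \<le> b"
  shows "step_fn p q \<in> test_fns {a..b}"
proof -
  have sq: "(cmod (step_fn p q k))\<^sup>2 = (if k \<in> {Suc p..q} then 1 / real (q - p) else 0)" for k
    unfolding step_fn_def using assms by (simp add: norm_divide power_divide)
  have "(\<Sum>k\<in>{a..b}. (cmod (step_fn p q k))\<^sup>2) = (\<Sum>k\<in>{a..b} \<inter> {Suc p..q}. 1 / real (q - p))"
    unfolding sq by (rule sum.inter_restrict[symmetric]) simp
  also have "\<dots> = 1"
    using assms by (simp add: Int_absorb1)
  finally show ?thesis
    unfolding test_fns_def l2norm_on_def step_fn_def using assms by auto
qed

lemma mass_mult_min_le_Sf_dev_step_fn:
  assumes "a \<le> p" "p < q" "q \<le> b"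
  shows "real (q - p) * min (\<Sum>k=a..p. (cmod (\<alpha> k))\<^sup>2) (\<Sum>k=q..b. (cmod (\<alpha> k))\<^sup>2)
      \<le> 2 * (Sf_dev \<alpha> {a..b} (step_fn p q))\<^sup>2"
proof -
  let ?S = "Sf (step_fn p q)" and ?m = "Sf_avg \<alpha> (step_fn p q) {a..b}"
    and ?h = "complex_of_real (sqrt (q - p))" and ?w = "\<lambda>k. (cmod (\<alpha> k))\<^sup>2"
  have "real (q - p) * min (\<Sum>k=a..p. ?w k) (\<Sum>k=q..b. ?w k)
      = (cmod ?h)\<^sup>2 * min (\<Sum>k=a..p. ?w k) (\<Sum>k=q..b. ?w k)"
    by simp
  also have "\<dots> \<le> 2 * ((cmod ?m)\<^sup>2 * (\<Sum>k=a..p. ?w k) + (cmod (?h - ?m))\<^sup>2 * (\<Sum>k=q..b. ?w k))"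
    by (rule norm_sq_mult_min_le) (simp_all add: sum_nonneg)
  also have "(cmod ?m)\<^sup>2 * (\<Sum>k=a..p. ?w k) = (\<Sum>k=a..p. (cmod (?S k - ?m))\<^sup>2 * ?w k)"
    unfolding sum_distrib_left by (rule sum.cong) (simp_all add: Sf_step_fn_below)
  also have "(cmod (?h - ?m))\<^sup>2 * (\<Sum>k=q..b. ?w k) = (\<Sum>k=q..b. (cmod (?S k - ?m))\<^sup>2 * ?w k)"
    unfolding sum_distrib_left by (rule sum.cong) (use assms in \<open>simp_all add: Sf_step_fn_above\<close>)
  also have "(\<Sum>k=a..p. (cmod (?S k - ?m))\<^sup>2 * ?w k) + (\<Sum>k=q..b. (cmod (?S k - ?m))\<^sup>2 * ?w k)
      = (\<Sum>k\<in>{a..p} \<union> {q..b}. (cmod (?S k - ?m))\<^sup>2 * ?w k)"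
    by (rule sum.union_disjoint[symmetric]) (use assms in auto)
  also have "\<dots> \<le> (Sf_dev \<alpha> {a..b} (step_fn p q))\<^sup>2"
    unfolding Sf_dev_sq by (rule sum_mono2) (use assms in auto)
  finally show ?thesis
    by simp
qed

lemma exists_mass_median:
  fixes w :: "nat \<Rightarrow> real"
  assumes "a \<le> b" and w: "\<And>k. 0 \<le> w k"
  obtains c where "a \<le> c" "c \<le> b"
    "\<And>s. a \<le> s \<Longrightarrow> s < c \<Longrightarrow> (\<Sum>k=a..s. w k) \<le> (\<Sum>k=c..b. w k)"
    "\<And>s. c < s \<Longrightarrow> s \<le> b \<Longrightarrow> (\<Sum>k=s..b. w k) \<le> (\<Sum>k=a..c. w k)"
proof -
  define P where "P c \<longleftrightarrow> a \<le> c \<and> (\<Sum>k=a..b. w k) \<le> 2 * (\<Sum>k=a..c. w k)" for c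
  define c where "c = (LEAST c. P c)"
  have "P b"
    unfolding P_def using assms by (simp add: sum_nonneg)
  then have "P c" and "c \<le> b"
    unfolding c_def by (auto intro: LeastI Least_le)
  have split: "(\<Sum>k=a..b. w k) = (\<Sum>k=a..s. w k) + (\<Sum>k=Suc s..b. w k)" if "a \<le> Suc s" "s \<le> b" for s
  proof -
    have "{a..b} = {a..s} \<union> {Suc s..b}"
      using that by auto
    then show ?thesis
      by (simp add: sum.union_disjoint ivl_disj_int)
  qed
  show ?thesis
  proof
    show "a \<le> c" "c \<le> b"
      using \<open>P c\<close> \<open>c \<le> b\<close> unfolding P_def by simp_all
  next
    fix s
    assume s: "a \<le> s" "s < c"
    have "\<not> P (c - 1)"
      unfolding c_def by (rule not_less_Least) (use s c_def in simp)
    moreover have "a \<le> c - 1"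
      using s by simp
    ultimately have "2 * (\<Sum>k=a..c - 1. w k) < (\<Sum>k=a..b. w k)"
      unfolding P_def by simp
    moreover have "(\<Sum>k=a..s. w k) \<le> (\<Sum>k=a..c - 1. w k)"
      using s w by (intro sum_mono2) auto
    ultimately show "(\<Sum>k=a..s. w k) \<le> (\<Sum>k=c..b. w k)"
      using split[of "c - 1"] s \<open>c \<le> b\<close> by simp
  next
    fix s
    assume s: "c < s" "s \<le> b"
    have "(\<Sum>k=s..b. w k) \<le> (\<Sum>k=Suc c..b. w k)"
      using s w by (intro sum_mono2) auto
    then show "(\<Sum>k=s..b. w k) \<le> (\<Sum>k=a..c. w k)"
      using split[of c] \<open>P c\<close> \<open>c \<le> b\<close> unfolding P_def by simp
  qed
qed

lemma Jc_le_if_mass_mult_min_le: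
  assumes "a \<le> b" "0 \<le> M"
    and mass: "\<And>p q. a \<le> p \<Longrightarrow> p < q \<Longrightarrow> q \<le> b \<Longrightarrow>
      real (q - p) * min (\<Sum>k=a..p. (cmod (\<alpha> k))\<^sup>2) (\<Sum>k=q..b. (cmod (\<alpha> k))\<^sup>2) \<le> M\<^sup>2"
  shows "Jc \<alpha> a b \<le> M"
proof -
  obtain c where c: "a \<le> c" "c \<le> b"
    and left: "\<And>s. a \<le> s \<Longrightarrow> s < c \<Longrightarrow> (\<Sum>k=a..s. (cmod (\<alpha> k))\<^sup>2) \<le> (\<Sum>k=c..b. (cmod (\<alpha> k))\<^sup>2)"
    and right: "\<And>s. c < s \<Longrightarrow> s \<le> b \<Longrightarrow> (\<Sum>k=s..b. (cmod (\<alpha> k))\<^sup>2) \<le> (\<Sum>k=a..c. (cmod (\<alpha> k))\<^sup>2)"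
    using exists_mass_median[OF \<open>a \<le> b\<close>, of "\<lambda>k. (cmod (\<alpha> k))\<^sup>2"] by auto
  have "Ac \<alpha> a c \<le> M"
    using c(1) \<open>0 \<le> M\<close> by (rule Ac_le) (use mass[of _ c] left c in \<open>simp add: min_absorb1\<close>)
  moreover have "Bc \<alpha> b c \<le> M"
    using c(2) \<open>0 \<le> M\<close> by (rule Bc_le) (use mass[of c] right c in \<open>simp add: min_absorb2\<close>)
  ultimately show ?thesis
    using Jc_le[OF c, of \<alpha>] by simp
qed

lemma Jc_le_Kc:
  assumes "a \<le> b"
  shows "Jc \<alpha> a b \<le> sqrt 2 * Kc \<alpha> {a..b}"
proof (rule Jc_le_if_mass_mult_min_le)
  fix p q
  assume pq: "a \<le> p" "p < q" "q \<le> b"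
  have "Sf_dev \<alpha> {a..b} (step_fn p q) \<le> Kc \<alpha> {a..b}"
    using bdd_above_Sf_dev[OF assms] step_fn_in_test_fns[OF pq] by (rule Sf_dev_le_Kc)
  then have "2 * (Sf_dev \<alpha> {a..b} (step_fn p q))\<^sup>2 \<le> (sqrt 2 * Kc \<alpha> {a..b})\<^sup>2"
    by (simp add: power_mult_distrib power_mono Sf_dev_nonneg)
  with mass_mult_min_le_Sf_dev_step_fn[OF pq, of \<alpha>]
  show "real (q - p) * min (\<Sum>k=a..p. (cmod (\<alpha> k))\<^sup>2) (\<Sum>k=q..b. (cmod (\<alpha> k))\<^sup>2)
      \<le> (sqrt 2 * Kc \<alpha> {a..b})\<^sup>2"
    by linarith
qed (use assms Kc_nonneg[OF bdd_above_Sf_dev[OF assms]] in simp_all)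

theorem lemma3p6:
  fixes \<alpha> :: "nat \<Rightarrow> complex" and a b :: nat
  assumes "summable (\<lambda>k. (cmod (\<alpha> k))\<^sup>2)"
    and "a \<le> b"
  shows "Jc \<alpha> a b / 2 \<le> Kc \<alpha> {a..b}
       \<and> Kc \<alpha> {a..b} = Lc \<alpha> {a..b} / sqrt 2
       \<and> Kc \<alpha> {a..b} \<le> 2 * Jc \<alpha> a b"
proof -
  \<comment> \<open>Only \<open>\<alpha>\<^sub>a, \<dots>, \<alpha>\<^sub>b\<close> enter.\<close>
  have bdd: "bdd_above (Sf_dev \<alpha> {a..b} ` test_fns {a..b})"
    using \<open>a \<le> b\<close> by (rule bdd_above_Sf_dev)
  have "Jc \<alpha> a b \<le> sqrt 2 * Kc \<alpha> {a..b}"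
    using \<open>a \<le> b\<close> by (rule Jc_le_Kc)
  moreover have "sqrt 2 * Kc \<alpha> {a..b} \<le> 2 * Kc \<alpha> {a..b}"
    using Kc_nonneg[OF bdd] by (intro mult_right_mono real_le_lsqrt) simp_all
  moreover have "Lc \<alpha> {a..b} = sqrt 2 * Kc \<alpha> {a..b}"
    using bdd by (intro Lc_eq_sqrt2_Kc) simp
  moreover have "Kc \<alpha> {a..b} \<le> 2 * Jc \<alpha> a b"
    using \<open>a \<le> b\<close> by (rule Kc_le_Jc)
  ultimately show ?thesis
    by simp
qed

end
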